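(* $\mathsf{ICM}$ is a variety. It is axiomatized by the axioms of commutative (unital) rings together with the equations $$x\approx x^2x^*,\qquad x\approx x^{**},\qquad (r_p(x))^p\approx(1-p^*p)\,x\quad\text{for every prime }p,$$ where $p$ denotes the term $1+\dots+1$ ($p$ summands).
   Context: The language is $\{+,\cdot,-,0,1,(\,)^*\}\cup\{r_p:p\text{ prime}\}$ with $(\,)^*$ and $r_p$ unary. A field is weakly rooted if it has characteristic $0$, or has prime characteristic $p$ and every element has a $p$-th root. Weak inverse: $a^*=a^{-1}$ if $a\ne0$, $0^*=0$. Weak $p$-root (in a weakly rooted field): $r_p(a)=\sqrt[p]{a}$ if the characteristic is $p$, and $0$ otherwise. An implicitly closed field is a weakly rooted field expanded by $(\,)^*$ and all $r_p$. $\mathsf{ICM}$ is the class of algebras isomorphic to subalgebras of direct products of implicitly closed fields. *)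

theory Defs
  imports "HOL-Computational_Algebra.Primes" "HOL-Library.FuncSet"
begin

text \<open>Algebras in the language {+, *, -, 0, 1, ( )^*} together with r_p for p prime.
  An algebra is given on a carrier set; the operation root p is r_p (only
  meaningful for prime p).\<close>

record 'a icalg =
  carrier :: "'a set"
  add :: "'a \<Rightarrow> 'a \<Rightarrow> 'a"
  mul :: "'a \<Rightarrow> 'a \<Rightarrow> 'a"
  neg :: "'a \<Rightarrow> 'a"
  zero :: 'a
  one :: 'a
  star :: "'a \<Rightarrow> 'a"
  root :: "nat \<Rightarrow> 'a \<Rightarrow> 'a"

definition is_algebra :: "('a, 'm) icalg_scheme \<Rightarrow> bool" where
  "is_algebra A \<longleftrightarrow>
     zero A \<in> carrier A \<and> one A \<in> carrier A \<and>
     (\<forall>x\<in>carrier A. \<forall>y\<in>carrier A. add A x y \<in> carrier A \<and> mul A x y \<in> carrier A) \<and>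
     (\<forall>x\<in>carrier A. neg A x \<in> carrier A \<and> star A x \<in> carrier A) \<and>
     (\<forall>p x. prime p \<and> x \<in> carrier A \<longrightarrow> root A p x \<in> carrier A)"

primrec natc :: "('a, 'm) icalg_scheme \<Rightarrow> nat \<Rightarrow> 'a" where
  "natc A 0 = zero A"
| "natc A (Suc n) = (if n = 0 then one A else add A (natc A n) (one A))"

primrec pw :: "('a, 'm) icalg_scheme \<Rightarrow> 'a \<Rightarrow> nat \<Rightarrow> 'a" where
  "pw A x 0 = one A"
| "pw A x (Suc n) = mul A (pw A x n) x"

definition comm_ring_ax :: "('a, 'm) icalg_scheme \<Rightarrow> bool" where
  "comm_ring_ax A \<longleftrightarrow>
     (\<forall>x\<in>carrier A. \<forall>y\<in>carrier A. \<forall>z\<in>carrier A.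
        add A (add A x y) z = add A x (add A y z) \<and>
        mul A (mul A x y) z = mul A x (mul A y z) \<and>
        mul A x (add A y z) = add A (mul A x y) (mul A x z)) \<and>
     (\<forall>x\<in>carrier A. \<forall>y\<in>carrier A. add A x y = add A y x \<and> mul A x y = mul A y x) \<and>
     (\<forall>x\<in>carrier A. add A x (zero A) = x \<and> add A x (neg A x) = zero A \<and>
        mul A x (one A) = x)"

definition ICM_axioms :: "('a, 'm) icalg_scheme \<Rightarrow> bool" where
  "ICM_axioms A \<longleftrightarrow> comm_ring_ax A \<and>
     (\<forall>x\<in>carrier A. x = mul A (pw A x 2) (star A x)) \<and>
     (\<forall>x\<in>carrier A. x = star A (star A x)) \<and>
     (\<forall>p x. prime p \<and> x \<in> carrier A \<longrightarrow>
        pw A (root A p x) p =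
          mul A (add A (one A) (neg A (mul A (star A (natc A p)) (natc A p)))) x)"

definition is_field :: "('a, 'm) icalg_scheme \<Rightarrow> bool" where
  "is_field F \<longleftrightarrow> is_algebra F \<and> comm_ring_ax F \<and> one F \<noteq> zero F \<and>
     (\<forall>x\<in>carrier F. x \<noteq> zero F \<longrightarrow> (\<exists>y\<in>carrier F. mul F x y = one F))"

definition char_zero_alg :: "('a, 'm) icalg_scheme \<Rightarrow> bool" where
  "char_zero_alg F \<longleftrightarrow> (\<forall>n>0. natc F n \<noteq> zero F)"

definition char_eq :: "('a, 'm) icalg_scheme \<Rightarrow> nat \<Rightarrow> bool" where
  "char_eq F p \<longleftrightarrow> p > 0 \<and> natc F p = zero F \<and> (\<forall>n. 0 < n \<and> n < p \<longrightarrow> natc F n \<noteq> zero F)"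

definition weakly_rooted :: "('a, 'm) icalg_scheme \<Rightarrow> bool" where
  "weakly_rooted F \<longleftrightarrow> char_zero_alg F \<or>
     (\<exists>p. prime p \<and> char_eq F p \<and> (\<forall>a\<in>carrier F. \<exists>b\<in>carrier F. pw F b p = a))"

definition implicitly_closed_field :: "('a, 'm) icalg_scheme \<Rightarrow> bool" where
  "implicitly_closed_field F \<longleftrightarrow> is_field F \<and> weakly_rooted F \<and>
     star F (zero F) = zero F \<and>
     (\<forall>a\<in>carrier F. a \<noteq> zero F \<longrightarrow> mul F a (star F a) = one F) \<and>
     (\<forall>p a. prime p \<and> a \<in> carrier F \<longrightarrow>
        (char_eq F p \<longrightarrow> pw F (root F p a) p = a) \<and>
        (\<not> char_eq F p \<longrightarrow> root F p a = zero F))"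

definition prod_alg :: "'i set \<Rightarrow> ('i \<Rightarrow> 'b icalg) \<Rightarrow> ('i \<Rightarrow> 'b) icalg" where
  "prod_alg I F = \<lparr> carrier = PiE I (\<lambda>i. carrier (F i)),
     add = (\<lambda>f g. \<lambda>i\<in>I. add (F i) (f i) (g i)),
     mul = (\<lambda>f g. \<lambda>i\<in>I. mul (F i) (f i) (g i)),
     neg = (\<lambda>f. \<lambda>i\<in>I. neg (F i) (f i)),
     zero = (\<lambda>i\<in>I. zero (F i)),
     one = (\<lambda>i\<in>I. one (F i)),
     star = (\<lambda>f. \<lambda>i\<in>I. star (F i) (f i)),
     root = (\<lambda>p f. \<lambda>i\<in>I. root (F i) p (f i)) \<rparr>"

definition is_hom :: "('a, 'm) icalg_scheme \<Rightarrow> ('b, 'n) icalg_scheme \<Rightarrow> ('a \<Rightarrow> 'b) \<Rightarrow> bool" where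
  "is_hom A B h \<longleftrightarrow> h \<in> carrier A \<rightarrow> carrier B \<and>
     h (zero A) = zero B \<and> h (one A) = one B \<and>
     (\<forall>x\<in>carrier A. \<forall>y\<in>carrier A. h (add A x y) = add B (h x) (h y) \<and>
        h (mul A x y) = mul B (h x) (h y)) \<and>
     (\<forall>x\<in>carrier A. h (neg A x) = neg B (h x) \<and> h (star A x) = star B (h x)) \<and>
     (\<forall>p x. prime p \<and> x \<in> carrier A \<longrightarrow> h (root A p x) = root B p (h x))"

definition ICM_embedding :: "'a icalg \<Rightarrow> 'i set \<Rightarrow> ('i \<Rightarrow> 'b icalg) \<Rightarrow> ('a \<Rightarrow> 'i \<Rightarrow> 'b) \<Rightarrow> bool" where
  "ICM_embedding A I F h \<longleftrightarrow> (\<forall>i\<in>I. implicitly_closed_field (F i)) \<and>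
     is_hom A (prod_alg I F) h \<and> inj_on h (carrier A)"

end

theory Submission
  imports Defs
begin

(* Soundness: in an implicitly closed field of characteristic p one has p^* p = 0 and r_p is the
   p-th root, while q^* q = 1 and r_q = 0 for every other prime q; so these fields satisfy the
   equations, and equations are inherited by subalgebras of products.

   Completeness: the equation x = x^2 x^* makes a model A von Neumann regular. Hence, for a <> 0,
   an ideal M maximal among those avoiding a is prime, and x^* inverts x modulo M for x outside M,
   so A/M is a field. All operations descend to A/M (for r_p in characteristic p by injectivity of
   the Frobenius map), so A/M is a field satisfying the equations, i.e. an implicitly closed field,
   and the quotient maps for all a <> 0 jointly embed A into the product of these fields. *)

lemma
  assumes "is_hom A B h"
  shows hom_closed: "x \<in> carrier A \<Longrightarrow> h x \<in> carrier B"
    and hom_zero: "h (zero A) = zero B"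
    and hom_one: "h (one A) = one B"
    and hom_add: "x \<in> carrier A \<Longrightarrow> y \<in> carrier A \<Longrightarrow> h (add A x y) = add B (h x) (h y)"
    and hom_mul: "x \<in> carrier A \<Longrightarrow> y \<in> carrier A \<Longrightarrow> h (mul A x y) = mul B (h x) (h y)"
    and hom_neg: "x \<in> carrier A \<Longrightarrow> h (neg A x) = neg B (h x)"
    and hom_star: "x \<in> carrier A \<Longrightarrow> h (star A x) = star B (h x)"
    and hom_root: "prime p \<Longrightarrow> x \<in> carrier A \<Longrightarrow> h (root A p x) = root B p (h x)"
  using assms unfolding is_hom_def by auto

locale icalgebra =
  fixes A :: "('a, 'm) icalg_scheme"
  assumes algebra: "is_algebra A"
begin

abbreviation add_A (infixl "\<oplus>" 65) where "x \<oplus> y \<equiv> add A x y"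
abbreviation mul_A (infixl "\<otimes>" 70) where "x \<otimes> y \<equiv> mul A x y"
abbreviation zero_A ("\<zero>") where "\<zero> \<equiv> zero A"
abbreviation one_A ("\<one>") where "\<one> \<equiv> one A"
abbreviation neg_A ("\<ominus> _" [81] 80) where "\<ominus> x \<equiv> neg A x"

lemma zero_closed [simp]: "\<zero> \<in> carrier A"
  and one_closed [simp]: "\<one> \<in> carrier A"
  and add_closed [simp]: "x \<in> carrier A \<Longrightarrow> y \<in> carrier A \<Longrightarrow> x \<oplus> y \<in> carrier A"
  and mul_closed [simp]: "x \<in> carrier A \<Longrightarrow> y \<in> carrier A \<Longrightarrow> x \<otimes> y \<in> carrier A"
  and neg_closed [simp]: "x \<in> carrier A \<Longrightarrow> \<ominus> x \<in> carrier A"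
  and star_closed [simp]: "x \<in> carrier A \<Longrightarrow> star A x \<in> carrier A"
  and root_closed [simp]: "prime p \<Longrightarrow> x \<in> carrier A \<Longrightarrow> root A p x \<in> carrier A"
  using algebra unfolding is_algebra_def by auto

lemma natc_closed [simp]: "natc A n \<in> carrier A"
  by (induction n) auto

lemma pw_closed [simp]: "x \<in> carrier A \<Longrightarrow> pw A x n \<in> carrier A"
  by (induction n) auto

lemma hom_pw: "is_hom A B h \<Longrightarrow> x \<in> carrier A \<Longrightarrow> h (pw A x n) = pw B (h x) n"
  by (induction n) (simp_all add: hom_one hom_mul)

lemma hom_natc: "is_hom A B h \<Longrightarrow> h (natc A n) = natc B n"
  by (induction n) (simp_all add: hom_zero hom_one hom_add)

end

primrec alg_sum :: "('a, 'm) icalg_scheme \<Rightarrow> (nat \<Rightarrow> 'a) \<Rightarrow> nat \<Rightarrow> 'a" where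
  "alg_sum A f 0 = zero A"
| "alg_sum A f (Suc n) = add A (alg_sum A f n) (f n)"

locale comm_ring_alg = icalgebra +
  assumes comm_ring: "comm_ring_ax A"
begin

lemma add_assoc: "x \<in> carrier A \<Longrightarrow> y \<in> carrier A \<Longrightarrow> z \<in> carrier A \<Longrightarrow> x \<oplus> y \<oplus> z = x \<oplus> (y \<oplus> z)"
  and mul_assoc: "x \<in> carrier A \<Longrightarrow> y \<in> carrier A \<Longrightarrow> z \<in> carrier A \<Longrightarrow> x \<otimes> y \<otimes> z = x \<otimes> (y \<otimes> z)"
  and distrib_left: "x \<in> carrier A \<Longrightarrow> y \<in> carrier A \<Longrightarrow> z \<in> carrier A \<Longrightarrow> x \<otimes> (y \<oplus> z) = x \<otimes> y \<oplus> x \<otimes> z"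
  and add_comm: "x \<in> carrier A \<Longrightarrow> y \<in> carrier A \<Longrightarrow> x \<oplus> y = y \<oplus> x"
  and mul_comm: "x \<in> carrier A \<Longrightarrow> y \<in> carrier A \<Longrightarrow> x \<otimes> y = y \<otimes> x"
  using comm_ring unfolding comm_ring_ax_def by blast+

lemma add_zero [simp]: "x \<in> carrier A \<Longrightarrow> x \<oplus> \<zero> = x"
  and add_neg [simp]: "x \<in> carrier A \<Longrightarrow> x \<oplus> \<ominus> x = \<zero>"
  and mul_one [simp]: "x \<in> carrier A \<Longrightarrow> x \<otimes> \<one> = x"
  using comm_ring unfolding comm_ring_ax_def by blast+

lemma add_left_commute: "x \<in> carrier A \<Longrightarrow> y \<in> carrier A \<Longrightarrow> z \<in> carrier A \<Longrightarrow> x \<oplus> (y \<oplus> z) = y \<oplus> (x \<oplus> z)"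
  by (metis add_assoc add_comm)

lemma mul_left_commute: "x \<in> carrier A \<Longrightarrow> y \<in> carrier A \<Longrightarrow> z \<in> carrier A \<Longrightarrow> x \<otimes> (y \<otimes> z) = y \<otimes> (x \<otimes> z)"
  by (metis mul_assoc mul_comm)

lemma distrib_right: "x \<in> carrier A \<Longrightarrow> y \<in> carrier A \<Longrightarrow> z \<in> carrier A \<Longrightarrow> (x \<oplus> y) \<otimes> z = x \<otimes> z \<oplus> y \<otimes> z"
  by (metis distrib_left mul_comm add_closed)

lemma zero_add [simp]: "x \<in> carrier A \<Longrightarrow> \<zero> \<oplus> x = x"
  by (metis add_comm add_zero zero_closed)

lemma one_mul [simp]: "x \<in> carrier A \<Longrightarrow> \<one> \<otimes> x = x"
  by (metis mul_comm mul_one one_closed)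

lemma neg_add [simp]: "x \<in> carrier A \<Longrightarrow> \<ominus> x \<oplus> x = \<zero>"
  by (metis add_comm add_neg neg_closed)

lemma neg_add_cancel_left [simp]: "x \<in> carrier A \<Longrightarrow> y \<in> carrier A \<Longrightarrow> \<ominus> x \<oplus> (x \<oplus> y) = y"
  by (simp flip: add_assoc)

lemma add_left_cancel:
  "x \<in> carrier A \<Longrightarrow> y \<in> carrier A \<Longrightarrow> z \<in> carrier A \<Longrightarrow> x \<oplus> y = x \<oplus> z \<Longrightarrow> y = z"
  by (metis neg_add_cancel_left)

lemma mul_zero [simp]: "x \<in> carrier A \<Longrightarrow> x \<otimes> \<zero> = \<zero>"
  by (metis add_left_cancel add_zero distrib_left mul_closed zero_closed)

lemma zero_mul [simp]: "x \<in> carrier A \<Longrightarrow> \<zero> \<otimes> x = \<zero>"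
  by (metis mul_comm mul_zero zero_closed)

lemma neg_unique: "x \<in> carrier A \<Longrightarrow> y \<in> carrier A \<Longrightarrow> x \<oplus> y = \<zero> \<Longrightarrow> y = \<ominus> x"
  by (metis add_left_cancel add_neg neg_closed)

lemma neg_neg [simp]: "x \<in> carrier A \<Longrightarrow> \<ominus> (\<ominus> x) = x"
  by (metis neg_add neg_closed neg_unique)

lemma neg_zero [simp]: "\<ominus> \<zero> = \<zero>"
  by (metis add_zero neg_unique zero_closed)

lemma neg_add_distrib: "x \<in> carrier A \<Longrightarrow> y \<in> carrier A \<Longrightarrow> \<ominus> (x \<oplus> y) = \<ominus> x \<oplus> \<ominus> y"
  by (rule neg_unique[symmetric]) (simp_all add: add_assoc add_left_commute[of y])

lemma neg_mul: "x \<in> carrier A \<Longrightarrow> y \<in> carrier A \<Longrightarrow> \<ominus> x \<otimes> y = \<ominus> (x \<otimes> y)"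
  by (rule neg_unique) (simp_all flip: distrib_right)

lemma mul_neg: "x \<in> carrier A \<Longrightarrow> y \<in> carrier A \<Longrightarrow> x \<otimes> \<ominus> y = \<ominus> (x \<otimes> y)"
  by (metis neg_mul mul_comm neg_closed)

lemma add_neg_eq_zero_iff:
  assumes "x \<in> carrier A" "y \<in> carrier A"
  shows "x \<oplus> \<ominus> y = \<zero> \<longleftrightarrow> x = y"
proof
  assume "x \<oplus> \<ominus> y = \<zero>"
  then have "\<ominus> y = \<ominus> x"
    using assms neg_unique[of x "\<ominus> y"] by simp
  then have "\<ominus> (\<ominus> y) = \<ominus> (\<ominus> x)"
    by simp
  then show "x = y"
    using assms by simp
qed (use assms in simp)

lemmas ring_simps = add_assoc mul_assoc add_comm mul_comm add_left_commute mul_left_commute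
  distrib_left distrib_right neg_add_distrib neg_mul mul_neg

lemma natc_Suc: "natc A (Suc n) = natc A n \<oplus> \<one>"
  by (cases n) auto

lemma natc_add: "natc A (m + n) = natc A m \<oplus> natc A n"
  by (induction n) (auto simp: natc_Suc add_assoc)

lemma natc_mult: "natc A (m * n) = natc A m \<otimes> natc A n"
  by (induction n) (auto simp: natc_add distrib_left add_comm)

lemma pw_zero: "n > 0 \<Longrightarrow> pw A \<zero> n = \<zero>"
  by (cases n) auto

(* The factor 1 - p^* p of the root axiom: in an implicitly closed field it is 1 in
   characteristic p and 0 otherwise. *)
abbreviation char_factor :: "nat \<Rightarrow> 'a" where
  "char_factor p \<equiv> \<one> \<oplus> \<ominus> (star A (natc A p) \<otimes> natc A p)"

lemma alg_sum_closed [simp]: "(\<And>k. f k \<in> carrier A) \<Longrightarrow> alg_sum A f n \<in> carrier A"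
  by (induction n) auto

lemma alg_sum_cong: "(\<And>k. k < n \<Longrightarrow> f k = g k) \<Longrightarrow> alg_sum A f n = alg_sum A g n"
  by (induction n) auto

lemma alg_sum_add:
  "(\<And>k. f k \<in> carrier A) \<Longrightarrow> (\<And>k. g k \<in> carrier A) \<Longrightarrow>
   alg_sum A (\<lambda>k. f k \<oplus> g k) n = alg_sum A f n \<oplus> alg_sum A g n"
  by (induction n) (auto simp: ring_simps)

lemma alg_sum_mult_left:
  "(\<And>k. f k \<in> carrier A) \<Longrightarrow> c \<in> carrier A \<Longrightarrow> c \<otimes> alg_sum A f n = alg_sum A (\<lambda>k. c \<otimes> f k) n"
  by (induction n) (auto simp: distrib_left)

lemma alg_sum_mult_right:
  "(\<And>k. f k \<in> carrier A) \<Longrightarrow> c \<in> carrier A \<Longrightarrow> alg_sum A f n \<otimes> c = alg_sum A (\<lambda>k. f k \<otimes> c) n"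
  by (induction n) (auto simp: distrib_right)

lemma alg_sum_Suc_shift:
  "(\<And>k. f k \<in> carrier A) \<Longrightarrow> alg_sum A f (Suc n) = f 0 \<oplus> alg_sum A (\<lambda>k. f (Suc k)) n"
  by (induction n) (auto simp: ring_simps)

lemma binomial_term_Suc:
  assumes "a \<in> carrier A" "b \<in> carrier A"
  shows "natc A (Suc n choose Suc k) \<otimes> (pw A a (Suc k) \<otimes> pw A b (Suc n - Suc k)) =
    natc A (n choose k) \<otimes> (pw A a k \<otimes> pw A b (n - k)) \<otimes> a \<oplus>
    natc A (n choose Suc k) \<otimes> (pw A a (Suc k) \<otimes> pw A b (n - Suc k)) \<otimes> b"
proof (cases "k < n")
  case True
  then have "n - k = Suc (n - Suc k)" by simp
  then show ?thesis
    using assms by (simp add: natc_add ring_simps)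
next
  case False
  then show ?thesis
    using assms by (simp add: natc_add ring_simps binomial_eq_0)
qed

theorem binomial:
  assumes a: "a \<in> carrier A" and b: "b \<in> carrier A"
  shows "pw A (a \<oplus> b) n = alg_sum A (\<lambda>k. natc A (n choose k) \<otimes> (pw A a k \<otimes> pw A b (n - k))) (Suc n)"
proof (induction n)
  case 0
  then show ?case using a b by simp
next
  case (Suc n)
  define t where "t m k = natc A (m choose k) \<otimes> (pw A a k \<otimes> pw A b (m - k))" for m k
  have closed: "t m k \<in> carrier A" for m k
    using a b by (simp add: t_def)
  have bottom: "t n 0 \<otimes> b = t (Suc n) 0"
    using b by (simp add: t_def)
  have top: "alg_sum A (\<lambda>k. t n (Suc k)) (Suc n) = alg_sum A (\<lambda>k. t n (Suc k)) n"
    using a b by (simp add: t_def binomial_eq_0)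
  have "pw A (a \<oplus> b) (Suc n) = alg_sum A (t n) (Suc n) \<otimes> (a \<oplus> b)"
    using Suc.IH unfolding t_def by simp
  also have "\<dots> = t n 0 \<otimes> b \<oplus> (alg_sum A (t n) (Suc n) \<otimes> a \<oplus> alg_sum A (\<lambda>k. t n (Suc k)) (Suc n) \<otimes> b)"
    using closed a b by (simp add: top alg_sum_Suc_shift[of "t n" n] ring_simps del: alg_sum.simps)
  also have "\<dots> = t n 0 \<otimes> b \<oplus> alg_sum A (\<lambda>k. t n k \<otimes> a \<oplus> t n (Suc k) \<otimes> b) (Suc n)"
    using closed a b by (simp only: alg_sum_add alg_sum_mult_right mul_closed)
  also have "\<dots> = t (Suc n) 0 \<oplus> alg_sum A (\<lambda>k. t (Suc n) (Suc k)) (Suc n)"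
    by (simp only: bottom, simp only: t_def binomial_term_Suc[OF a b])
  also have "\<dots> = alg_sum A (t (Suc n)) (Suc (Suc n))"
    using closed by (simp only: alg_sum_Suc_shift)
  finally show ?case
    unfolding t_def .
qed

lemma freshmans_dream:
  assumes p: "prime p" and a: "a \<in> carrier A" and b: "b \<in> carrier A"
  shows "\<exists>c\<in>carrier A. pw A (a \<oplus> b) p = pw A a p \<oplus> pw A b p \<oplus> natc A p \<otimes> c"
proof -
  obtain q where q: "p = Suc q" using p by (cases p) auto
  define T where "T k = natc A (p choose k) \<otimes> (pw A a k \<otimes> pw A b (p - k))" for k
  define W where "W k = natc A ((p choose Suc k) div p) \<otimes> (pw A a (Suc k) \<otimes> pw A b (p - Suc k))" for k
  have closed: "T k \<in> carrier A" "W k \<in> carrier A" for k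
    using a b by (auto simp: T_def W_def)
  have "pw A (a \<oplus> b) p = alg_sum A T (Suc p)"
    unfolding T_def by (rule binomial[OF a b])
  also have "\<dots> = T 0 \<oplus> (alg_sum A (\<lambda>k. T (Suc k)) q \<oplus> T p)"
    using closed by (simp only: alg_sum_Suc_shift) (simp add: q)
  also have "alg_sum A (\<lambda>k. T (Suc k)) q = alg_sum A (\<lambda>k. natc A p \<otimes> W k) q"
  proof (rule alg_sum_cong)
    fix k assume "k < q"
    then have "p dvd (p choose Suc k)" using q p by (intro dvd_choose_prime) auto
    then have "natc A (p choose Suc k) = natc A p \<otimes> natc A ((p choose Suc k) div p)"
      by (metis dvd_mult_div_cancel natc_mult)
    then show "T (Suc k) = natc A p \<otimes> W k" using a b by (simp add: T_def W_def ring_simps)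
  qed
  also have "\<dots> = natc A p \<otimes> alg_sum A W q"
    using closed by (simp add: alg_sum_mult_left)
  finally show ?thesis
    using a b closed by (intro bexI[of _ "alg_sum A W q"]) (simp_all add: T_def ring_simps q)
qed

definition ideal :: "'a set \<Rightarrow> bool" where
  "ideal J \<longleftrightarrow> J \<subseteq> carrier A \<and> \<zero> \<in> J \<and> (\<forall>x\<in>J. \<forall>y\<in>J. x \<oplus> y \<in> J) \<and>
     (\<forall>x\<in>J. \<forall>r\<in>carrier A. r \<otimes> x \<in> J)"

definition prime_ideal :: "'a set \<Rightarrow> bool" where
  "prime_ideal M \<longleftrightarrow> ideal M \<and> \<one> \<notin> M \<and>
     (\<forall>x\<in>carrier A. \<forall>y\<in>carrier A. x \<otimes> y \<in> M \<longrightarrow> x \<in> M \<or> y \<in> M)"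

lemma ideal_zero: "ideal {\<zero>}"
  unfolding ideal_def by auto

lemma ideal_colon:
  assumes "ideal M" and "y \<in> carrier A"
  shows "ideal {z \<in> carrier A. z \<otimes> y \<in> M}"
  using assms unfolding ideal_def by (auto simp: distrib_right mul_assoc)

lemma ideal_subset_colon:
  assumes "ideal M" and "y \<in> carrier A"
  shows "M \<subseteq> {z \<in> carrier A. z \<otimes> y \<in> M}"
proof
  fix x assume "x \<in> M"
  moreover from this have "x \<in> carrier A"
    using assms(1) unfolding ideal_def by blast
  ultimately show "x \<in> {z \<in> carrier A. z \<otimes> y \<in> M}"
    using assms unfolding ideal_def by (simp add: mul_comm[of x])
qed

lemma ideal_Union_chain:
  assumes "C \<noteq> {}" and "subset.chain {J. ideal J} C"
  shows "ideal (\<Union>C)"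
proof -
  have ideals: "\<And>J. J \<in> C \<Longrightarrow> ideal J"
    and comparable: "\<And>J K. J \<in> C \<Longrightarrow> K \<in> C \<Longrightarrow> J \<subseteq> K \<or> K \<subseteq> J"
    using assms(2) unfolding subset.chain_def by auto
  show ?thesis unfolding ideal_def
  proof (intro conjI ballI)
    show "\<Union>C \<subseteq> carrier A" and "\<zero> \<in> \<Union>C"
      using assms(1) ideals unfolding ideal_def by blast+
  next
    fix x y assume "x \<in> \<Union>C" "y \<in> \<Union>C"
    then obtain J K where "J \<in> C" "K \<in> C" "x \<in> J" "y \<in> K" by blast
    then show "x \<oplus> y \<in> \<Union>C"
      using comparable[of J K] ideals unfolding ideal_def by blast
  next
    fix x r assume "x \<in> \<Union>C" "r \<in> carrier A"
    then show "r \<otimes> x \<in> \<Union>C"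
      using ideals unfolding ideal_def by blast
  qed
qed

lemma exists_maximal_ideal_avoiding:
  assumes "a \<noteq> \<zero>"
  obtains M where "ideal M" "a \<notin> M" "\<And>J. ideal J \<Longrightarrow> a \<notin> J \<Longrightarrow> M \<subseteq> J \<Longrightarrow> J = M"
proof -
  have "\<exists>M\<in>{J. ideal J \<and> a \<notin> J}. \<forall>J\<in>{J. ideal J \<and> a \<notin> J}. M \<subseteq> J \<longrightarrow> J = M"
  proof (rule subset_Zorn_nonempty)
    show "{J. ideal J \<and> a \<notin> J} \<noteq> {}"
      using ideal_zero assms by blast
  next
    fix C assume C: "C \<noteq> {}" and chain: "subset.chain {J. ideal J \<and> a \<notin> J} C"
    then have "subset.chain {J. ideal J} C" and "a \<notin> \<Union>C"
      unfolding subset.chain_def by auto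
    then show "\<Union>C \<in> {J. ideal J \<and> a \<notin> J}"
      using ideal_Union_chain[OF C] by blast
  qed
  then show ?thesis using that by blast
qed

end

locale alg_ideal = comm_ring_alg +
  fixes J :: "'a set"
  assumes ideal: "ideal J"
begin

lemma ideal_subset: "x \<in> J \<Longrightarrow> x \<in> carrier A"
  and zero_mem: "\<zero> \<in> J"
  and add_mem: "x \<in> J \<Longrightarrow> y \<in> J \<Longrightarrow> x \<oplus> y \<in> J"
  and mul_mem_left: "x \<in> J \<Longrightarrow> r \<in> carrier A \<Longrightarrow> r \<otimes> x \<in> J"
  using ideal unfolding ideal_def by blast+

lemma mul_mem_right: "x \<in> J \<Longrightarrow> r \<in> carrier A \<Longrightarrow> x \<otimes> r \<in> J"
  using mul_mem_left[of x r] by (simp add: ideal_subset mul_comm[of x r])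

lemma neg_mem: "x \<in> J \<Longrightarrow> \<ominus> x \<in> J"
  using mul_mem_left[of x "\<ominus> \<one>"] by (simp add: ideal_subset neg_mul)

definition equiv_mod :: "'a \<Rightarrow> 'a \<Rightarrow> bool" (infix "\<sim>" 50) where
  "x \<sim> y \<longleftrightarrow> x \<in> carrier A \<and> y \<in> carrier A \<and> x \<oplus> \<ominus> y \<in> J"

lemma equiv_closed: "x \<sim> y \<Longrightarrow> x \<in> carrier A" "x \<sim> y \<Longrightarrow> y \<in> carrier A"
  unfolding equiv_mod_def by simp_all

lemma equiv_refl: "x \<in> carrier A \<Longrightarrow> x \<sim> x"
  unfolding equiv_mod_def by (simp add: zero_mem)

lemma equiv_sym: "x \<sim> y \<Longrightarrow> y \<sim> x"
  unfolding equiv_mod_def using neg_mem[of "x \<oplus> \<ominus> y"] by (simp add: neg_add_distrib add_comm)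

lemma equiv_trans: "x \<sim> y \<Longrightarrow> y \<sim> z \<Longrightarrow> x \<sim> z"
  unfolding equiv_mod_def using add_mem[of "x \<oplus> \<ominus> y" "y \<oplus> \<ominus> z"] by (simp add: add_assoc)

lemma equiv_add: "x \<sim> x' \<Longrightarrow> y \<sim> y' \<Longrightarrow> x \<oplus> y \<sim> x' \<oplus> y'"
proof -
  assume "x \<sim> x'" "y \<sim> y'"
  then have "(x \<oplus> \<ominus> x') \<oplus> (y \<oplus> \<ominus> y') \<in> J" and closed: "x \<in> carrier A" "x' \<in> carrier A"
    "y \<in> carrier A" "y' \<in> carrier A"
    unfolding equiv_mod_def by (simp_all add: add_mem)
  then show ?thesis
    unfolding equiv_mod_def by (simp add: ring_simps)
qed

lemma equiv_neg: "x \<sim> y \<Longrightarrow> \<ominus> x \<sim> \<ominus> y"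
  unfolding equiv_mod_def using neg_mem[of "x \<oplus> \<ominus> y"] by (simp add: neg_add_distrib)

lemma equiv_mul_left: "y \<sim> y' \<Longrightarrow> x \<in> carrier A \<Longrightarrow> x \<otimes> y \<sim> x \<otimes> y'"
  unfolding equiv_mod_def using mul_mem_left[of "y \<oplus> \<ominus> y'" x] by (simp add: distrib_left mul_neg)

lemma equiv_mul: "x \<sim> x' \<Longrightarrow> y \<sim> y' \<Longrightarrow> x \<otimes> y \<sim> x' \<otimes> y'"
  by (metis equiv_closed equiv_mul_left equiv_trans mul_comm)

lemma equiv_zero_iff: "x \<sim> \<zero> \<longleftrightarrow> x \<in> J"
  unfolding equiv_mod_def using ideal_subset by auto

lemma equiv_mem: "x \<sim> y \<Longrightarrow> x \<in> J \<Longrightarrow> y \<in> J"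
  by (meson equiv_sym equiv_trans equiv_zero_iff)

lemma frobenius_equiv:
  assumes "prime p" "natc A p \<in> J" "a \<in> carrier A" "b \<in> carrier A"
  shows "pw A (a \<oplus> b) p \<sim> pw A a p \<oplus> pw A b p"
proof -
  obtain c where "c \<in> carrier A" and c: "pw A (a \<oplus> b) p = pw A a p \<oplus> pw A b p \<oplus> natc A p \<otimes> c"
    using freshmans_dream assms by blast
  then have "natc A p \<otimes> c \<sim> \<zero>"
    using assms(2) by (simp add: equiv_zero_iff mul_mem_right)
  then have "pw A a p \<oplus> pw A b p \<oplus> natc A p \<otimes> c \<sim> pw A a p \<oplus> pw A b p \<oplus> \<zero>"
    using assms by (intro equiv_add equiv_refl) auto
  then show ?thesis
    using assms by (simp add: c)
qed

end

locale alg_prime_ideal = comm_ring_alg +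
  fixes J :: "'a set"
  assumes prime_ideal: "prime_ideal J"

sublocale alg_prime_ideal \<subseteq> alg_ideal
  using prime_ideal unfolding prime_ideal_def by unfold_locales blast

context alg_prime_ideal
begin

lemma one_not_mem: "\<one> \<notin> J"
  and prime_mem: "x \<in> carrier A \<Longrightarrow> y \<in> carrier A \<Longrightarrow> x \<otimes> y \<in> J \<Longrightarrow> x \<in> J \<or> y \<in> J"
  using prime_ideal unfolding prime_ideal_def by blast+

lemma pw_mem_imp_mem: "x \<in> carrier A \<Longrightarrow> pw A x n \<in> J \<Longrightarrow> n > 0 \<Longrightarrow> x \<in> J"
proof (induction n)
  case (Suc n)
  then have "pw A x n \<in> J \<or> x \<in> J"
    by (intro prime_mem) simp_all
  then show ?case
    using Suc one_not_mem by (cases n) auto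
qed simp

lemma frobenius_injective:
  assumes p: "prime p" "natc A p \<in> J" and equiv: "pw A u p \<sim> pw A v p"
    and closed: "u \<in> carrier A" "v \<in> carrier A"
  shows "u \<sim> v"
proof -
  let ?d = "u \<oplus> \<ominus> v"
  have "pw A (?d \<oplus> v) p \<sim> pw A ?d p \<oplus> pw A v p"
    using frobenius_equiv[OF p] closed by simp
  then have "pw A ?d p \<oplus> pw A v p \<sim> pw A v p"
    using closed equiv by (simp add: add_assoc) (metis equiv_sym equiv_trans)
  then have "pw A ?d p \<oplus> pw A v p \<oplus> \<ominus> pw A v p \<sim> pw A v p \<oplus> \<ominus> pw A v p"
    using closed by (intro equiv_add equiv_refl) simp_all
  then have "pw A ?d p \<in> J"
    using closed by (simp add: add_assoc equiv_zero_iff)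
  then show ?thesis
    using closed pw_mem_imp_mem prime_gt_0_nat[OF p(1)] unfolding equiv_mod_def by simp
qed

end

locale icm_alg = comm_ring_alg +
  assumes ICM: "ICM_axioms A"
begin

lemma regular [simp]: "x \<in> carrier A \<Longrightarrow> pw A x 2 \<otimes> star A x = x"
  and star_star [simp]: "x \<in> carrier A \<Longrightarrow> star A (star A x) = x"
  and root_pow [simp]: "prime p \<Longrightarrow> x \<in> carrier A \<Longrightarrow> pw A (root A p x) p = char_factor p \<otimes> x"
  using ICM unfolding ICM_axioms_def by auto

lemma mul_mul_star: "x \<in> carrier A \<Longrightarrow> x \<otimes> x \<otimes> star A x = x"
  using regular by (simp add: numeral_2_eq_2)

lemma star_zero [simp]: "star A \<zero> = \<zero>"
  using regular[of "star A \<zero>"] by simp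

(* Krull's argument, with the regularity a = a a a^* in place of a multiplicatively closed set. *)
lemma maximal_ideal_avoiding_is_prime:
  assumes M: "ideal M" "a \<in> carrier A" "a \<notin> M"
    and maximal: "\<And>J. ideal J \<Longrightarrow> a \<notin> J \<Longrightarrow> M \<subseteq> J \<Longrightarrow> J = M"
  shows "prime_ideal M"
proof -
  have colon_avoids: "a \<otimes> y \<in> M" if "x \<in> carrier A" "y \<in> carrier A" "x \<otimes> y \<in> M" "x \<notin> M" for x y
    using maximal[OF ideal_colon[OF M(1)] _ ideal_subset_colon[OF M(1)]] M(2) that by blast
  have "\<one> \<notin> M"
    using M unfolding ideal_def by (metis mul_one)
  moreover have "y \<in> M" if xy: "x \<in> carrier A" "y \<in> carrier A" "x \<otimes> y \<in> M" "x \<notin> M" for x y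
  proof (rule ccontr)
    assume "y \<notin> M"
    moreover have "y \<otimes> a \<in> M"
      using colon_avoids[OF xy] xy M(2) by (simp add: mul_comm)
    ultimately have "a \<otimes> a \<in> M"
      using colon_avoids[of y a] xy M(2) by blast
    then have "a \<otimes> a \<otimes> star A a \<in> M"
      using M unfolding ideal_def by (simp add: mul_comm)
    then show False
      using M mul_mul_star by simp
  qed
  ultimately show ?thesis
    unfolding prime_ideal_def using M(1) by blast
qed

lemma exists_prime_ideal_avoiding:
  assumes "a \<in> carrier A" "a \<noteq> \<zero>"
  obtains M where "prime_ideal M" "a \<notin> M"
  using exists_maximal_ideal_avoiding[OF assms(2)] maximal_ideal_avoiding_is_prime[OF _ assms(1)] by metis

end

lemma icm_algI: "is_algebra A \<Longrightarrow> ICM_axioms A \<Longrightarrow> icm_alg A"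
  unfolding icm_alg_def icm_alg_axioms_def comm_ring_alg_def comm_ring_alg_axioms_def
    icalgebra_def ICM_axioms_def by blast

lemma ICM_axioms_hom_image:
  assumes "icm_alg A" and hom: "is_hom A B h" and onto: "carrier B = h ` carrier A"
  shows "ICM_axioms B"
proof -
  interpret icm_alg A by fact
  note hom_rules = hom_zero[OF hom, symmetric] hom_one[OF hom, symmetric]
    hom_add[OF hom, symmetric] hom_mul[OF hom, symmetric] hom_neg[OF hom, symmetric]
    hom_star[OF hom, symmetric] hom_root[OF hom, symmetric] hom_pw[OF hom, symmetric]
    hom_natc[OF hom, symmetric]
  show ?thesis
    unfolding ICM_axioms_def comm_ring_ax_def onto
    by (auto simp: hom_rules) (simp_all add: ring_simps)
qed

lemma (in icalgebra) ICM_axioms_of_separating_homs: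
  assumes icm: "\<And>i. i \<in> I \<Longrightarrow> icm_alg (B i)" and hom: "\<And>i. i \<in> I \<Longrightarrow> is_hom A (B i) (H i)"
    and separating: "\<And>x y. x \<in> carrier A \<Longrightarrow> y \<in> carrier A \<Longrightarrow> (\<And>i. i \<in> I \<Longrightarrow> H i x = H i y) \<Longrightarrow> x = y"
  shows "ICM_axioms A"
proof -
  have ring: "comm_ring_alg (B i)" and alg: "icalgebra (B i)" if "i \<in> I" for i
    using icm[OF that] unfolding icm_alg_def comm_ring_alg_def by blast+
  note hom_rules = hom_closed[OF hom] hom_zero[OF hom] hom_one[OF hom] hom_add[OF hom] hom_mul[OF hom]
    hom_neg[OF hom] hom_star[OF hom] hom_root[OF hom] hom_pw[OF hom] hom_natc[OF hom]
  note B_rules = icalgebra.add_closed[OF alg] icalgebra.mul_closed[OF alg] icalgebra.neg_closed[OF alg]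
    icalgebra.star_closed[OF alg] icalgebra.pw_closed[OF alg] icalgebra.natc_closed[OF alg]
    comm_ring_alg.add_assoc[OF ring] comm_ring_alg.mul_assoc[OF ring] comm_ring_alg.distrib_left[OF ring]
    comm_ring_alg.add_zero[OF ring] comm_ring_alg.add_neg[OF ring] comm_ring_alg.mul_one[OF ring]
    icm_alg.regular[OF icm] icm_alg.star_star[OF icm] icm_alg.root_pow[OF icm]
  show ?thesis
    unfolding ICM_axioms_def comm_ring_ax_def
    by (intro conjI ballI allI impI; (elim conjE)?; rule separating)
      (simp_all add: hom_rules B_rules,
       simp_all add: hom_rules comm_ring_alg.add_comm[OF ring] comm_ring_alg.mul_comm[OF ring])
qed

lemma (in icalgebra) is_hom_prod_alg_iff:
  "is_hom A (prod_alg I F) h \<longleftrightarrow>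
    h ` carrier A \<subseteq> extensional I \<and> (\<forall>i\<in>I. is_hom A (F i) (\<lambda>x. h x i))"
proof
  assume "is_hom A (prod_alg I F) h"
  then show "h ` carrier A \<subseteq> extensional I \<and> (\<forall>i\<in>I. is_hom A (F i) (\<lambda>x. h x i))"
    unfolding is_hom_def prod_alg_def by (auto simp: PiE_iff Pi_iff)
next
  assume "h ` carrier A \<subseteq> extensional I \<and> (\<forall>i\<in>I. is_hom A (F i) (\<lambda>x. h x i))"
  then have ext: "x \<in> carrier A \<Longrightarrow> h x \<in> extensional I"
    and hom: "\<forall>i\<in>I. is_hom A (F i) (\<lambda>x. h x i)" for x
    by auto
  show "is_hom A (prod_alg I F) h"
    using hom unfolding is_hom_def prod_alg_def
    by (auto simp: PiE_iff Pi_iff ext intro!: extensionalityI[OF ext])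
qed

locale field_alg = comm_ring_alg +
  assumes one_neq_zero: "\<one> \<noteq> \<zero>"
    and exists_inverse: "x \<in> carrier A \<Longrightarrow> x \<noteq> \<zero> \<Longrightarrow> \<exists>y\<in>carrier A. x \<otimes> y = \<one>"
begin

lemma mul_eq_zero: "x \<in> carrier A \<Longrightarrow> y \<in> carrier A \<Longrightarrow> x \<otimes> y = \<zero> \<Longrightarrow> x = \<zero> \<or> y = \<zero>"
  by (metis exists_inverse mul_assoc mul_comm mul_zero one_mul)

lemma pw_eq_zero:
  assumes "x \<in> carrier A" "pw A x n = \<zero>"
  shows "x = \<zero>"
  using assms(2)
proof (induction n)
  case (Suc n)
  then show ?case
    using mul_eq_zero[of "pw A x n" x] assms(1) by auto
qed (use one_neq_zero in simp)

lemma char_eq_dvd: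
  assumes "char_eq A q" and "natc A n = \<zero>"
  shows "q dvd n"
proof -
  have "natc A n = natc A q \<otimes> natc A (n div q) \<oplus> natc A (n mod q)"
    by (metis div_mult_mod_eq mult.commute natc_add natc_mult)
  then have "natc A (n mod q) = \<zero>"
    using assms unfolding char_eq_def by simp
  moreover have "n mod q < q"
    using assms(1) unfolding char_eq_def by simp
  ultimately show ?thesis
    using assms(1) unfolding char_eq_def by (auto simp: dvd_eq_mod_eq_0)
qed

lemma exists_prime_char:
  assumes "\<not> char_zero_alg A"
  obtains q where "prime q" "char_eq A q"
proof -
  define q where "q = (LEAST n. 0 < n \<and> natc A n = \<zero>)"
  have q: "0 < q" "natc A q = \<zero>"
    using assms LeastI_ex[of "\<lambda>n. 0 < n \<and> natc A n = \<zero>"] unfolding q_def char_zero_alg_def by auto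
  have below: "natc A n \<noteq> \<zero>" if "0 < n" "n < q" for n
    using not_less_Least that unfolding q_def by blast
  have "prime q"
    unfolding prime_nat_iff
  proof (intro conjI allI impI)
    show "1 < q"
      using q one_neq_zero by (cases "q = 1") auto
  next
    fix m assume "m dvd q"
    then obtain k where k: "q = m * k" ..
    then have pos: "0 < m" "0 < k" and le: "m \<le> q" "k \<le> q"
      using q(1) by auto
    have "natc A m = \<zero> \<or> natc A k = \<zero>"
      using q(2) k mul_eq_zero natc_mult by simp
    then have "m = q \<or> k = q"
      using below pos le by (meson le_neq_implies_less)
    then show "m = 1 \<or> m = q"
      using k q(1) by auto
  qed
  moreover have "char_eq A q"
    unfolding char_eq_def using q below by blast
  ultimately show ?thesis using that by blast
qed

lemma weakly_rooted_char_eq: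
  assumes "weakly_rooted A" "prime p" "natc A p = \<zero>"
  shows "char_eq A p"
proof -
  have "\<not> char_zero_alg A"
    using assms(2,3) prime_gt_0_nat unfolding char_zero_alg_def by blast
  then obtain q where "prime q" "char_eq A q"
    using assms(1) unfolding weakly_rooted_def by blast
  moreover from this have "q dvd p"
    using char_eq_dvd assms(3) by blast
  ultimately show ?thesis
    using assms(2) primes_dvd_imp_eq by blast
qed

lemma char_factor_eq:
  assumes star_zero: "star A \<zero> = \<zero>" and mul_star: "\<And>x. x \<in> carrier A \<Longrightarrow> x \<noteq> \<zero> \<Longrightarrow> x \<otimes> star A x = \<one>"
    and "weakly_rooted A" "prime p"
  shows "char_factor p = (if char_eq A p then \<one> else \<zero>)"
proof (cases "char_eq A p")
  case True
  then show ?thesis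
    using star_zero unfolding char_eq_def by simp
next
  case False
  then have "natc A p \<noteq> \<zero>"
    using weakly_rooted_char_eq assms(3,4) by blast
  then show ?thesis
    using False mul_star[of "natc A p"] by (simp add: mul_comm)
qed

lemma is_field: "is_field A"
  unfolding is_field_def using algebra comm_ring one_neq_zero exists_inverse by blast

lemma ICM_axioms_if_implicitly_closed:
  assumes "implicitly_closed_field A"
  shows "ICM_axioms A"
proof -
  have weakly_rooted: "weakly_rooted A" and star_zero: "star A \<zero> = \<zero>"
    and mul_star: "\<And>x. x \<in> carrier A \<Longrightarrow> x \<noteq> \<zero> \<Longrightarrow> x \<otimes> star A x = \<one>"
    and root_char: "\<And>p x. prime p \<Longrightarrow> x \<in> carrier A \<Longrightarrow> char_eq A p \<Longrightarrow> pw A (root A p x) p = x"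
    and root_other: "\<And>p x. prime p \<Longrightarrow> x \<in> carrier A \<Longrightarrow> \<not> char_eq A p \<Longrightarrow> root A p x = \<zero>"
    using assms unfolding implicitly_closed_field_def by auto
  have star_nonzero: "star A x \<noteq> \<zero>" if "x \<in> carrier A" "x \<noteq> \<zero>" for x
    using mul_star[OF that] one_neq_zero that by auto
  have "x = pw A x 2 \<otimes> star A x" if "x \<in> carrier A" for x
    using that star_zero mul_star[OF that] by (cases "x = \<zero>") (simp_all add: numeral_2_eq_2 mul_assoc)
  moreover have "x = star A (star A x)" if x: "x \<in> carrier A" for x
  proof (cases "x = \<zero>")
    case False
    have "x = x \<otimes> (star A x \<otimes> star A (star A x))"
      using mul_star[OF star_closed star_nonzero] x False by simp
    also have "\<dots> = star A (star A x)"
      using mul_star x False by (simp flip: mul_assoc)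
    finally show ?thesis .
  qed (simp add: star_zero)
  moreover have "pw A (root A p x) p = char_factor p \<otimes> x" if "prime p" "x \<in> carrier A" for p x
    using that char_factor_eq[OF star_zero mul_star weakly_rooted] root_char root_other pw_zero
      prime_gt_0_nat by simp
  ultimately show ?thesis
    unfolding ICM_axioms_def using comm_ring by blast
qed

lemma implicitly_closed_if_ICM_axioms:
  assumes "ICM_axioms A"
  shows "implicitly_closed_field A"
proof -
  interpret icm_alg A
    using assms by unfold_locales
  have mul_star: "x \<otimes> star A x = \<one>" if x: "x \<in> carrier A" "x \<noteq> \<zero>" for x
  proof -
    obtain y where y: "y \<in> carrier A" "x \<otimes> y = \<one>"
      using exists_inverse x by blast
    have "x \<otimes> star A x = (x \<otimes> y) \<otimes> (x \<otimes> star A x)"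
      using x by (simp only: y(2) one_mul mul_closed star_closed)
    also have "\<dots> = y \<otimes> (x \<otimes> x \<otimes> star A x)"
      using x y(1) by (simp add: ring_simps)
    also have "\<dots> = \<one>"
      using x y by (simp add: mul_mul_star mul_comm[of y x])
    finally show ?thesis .
  qed
  have weakly_rooted: "weakly_rooted A"
  proof (cases "char_zero_alg A")
    case False
    then obtain q where q: "prime q" "char_eq A q"
      using exists_prime_char by blast
    then have "pw A (root A q a) q = a" if "a \<in> carrier A" for a
      using that unfolding char_eq_def by simp
    then show ?thesis
      unfolding weakly_rooted_def using q by (metis root_closed)
  qed (simp add: weakly_rooted_def)
  have "char_factor p = (if char_eq A p then \<one> else \<zero>)" if "prime p" for p
    using char_factor_eq[OF star_zero mul_star weakly_rooted that] .
  then have "(char_eq A p \<longrightarrow> pw A (root A p a) p = a) \<and> (\<not> char_eq A p \<longrightarrow> root A p a = \<zero>)"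
    if "prime p" "a \<in> carrier A" for p a
    using that root_pow[OF that] pw_eq_zero[of "root A p a" p] by simp
  then show ?thesis
    unfolding implicitly_closed_field_def using is_field weakly_rooted mul_star by auto
qed

end

lemma is_field_imp_field_alg: "is_field F \<Longrightarrow> field_alg F"
  unfolding is_field_def field_alg_def field_alg_axioms_def comm_ring_alg_def comm_ring_alg_axioms_def
    icalgebra_def by blast

lemma implicitly_closed_field_iff: "implicitly_closed_field F \<longleftrightarrow> is_field F \<and> ICM_axioms F"
  using field_alg.ICM_axioms_if_implicitly_closed field_alg.implicitly_closed_if_ICM_axioms
    is_field_imp_field_alg unfolding implicitly_closed_field_def by blast

locale icm_prime_ideal = icm_alg + alg_prime_ideal
begin

lemmas [trans] = equiv_trans

lemma star_mem: "x \<in> J \<Longrightarrow> star A x \<in> J"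
  using mul_mem_left[of x "pw A (star A x) 2"] regular[of "star A x"] by (simp add: ideal_subset)

lemma mul_star_equiv_one:
  assumes "x \<in> carrier A" "x \<notin> J"
  shows "x \<otimes> star A x \<sim> \<one>"
proof -
  have "x \<otimes> (x \<otimes> star A x \<oplus> \<ominus> \<one>) = x \<otimes> x \<otimes> star A x \<oplus> \<ominus> x"
    using assms by (simp add: distrib_left mul_neg mul_assoc)
  also have "\<dots> = \<zero>"
    using assms by (simp add: mul_mul_star)
  finally have "x \<otimes> star A x \<oplus> \<ominus> \<one> \<in> J"
    using assms prime_mem[of x] zero_mem by auto
  then show ?thesis
    using assms unfolding equiv_mod_def by simp
qed

lemma star_equiv:
  assumes "x \<sim> y"
  shows "star A x \<sim> star A y"
proof (cases "x \<in> J")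
  case True
  then have "star A x \<sim> \<zero>" and "star A y \<sim> \<zero>"
    using assms equiv_mem star_mem by (simp_all add: equiv_zero_iff)
  then show ?thesis
    using equiv_sym equiv_trans by blast
next
  case False
  have closed: "x \<in> carrier A" "y \<in> carrier A" and "y \<notin> J"
    using assms False equiv_closed equiv_mem equiv_sym by blast+
  have "star A x = star A x \<otimes> \<one>"
    using closed by simp
  also have "\<dots> \<sim> star A x \<otimes> (y \<otimes> star A y)"
    using closed \<open>y \<notin> J\<close> by (intro equiv_mul_left equiv_sym[OF mul_star_equiv_one]) simp_all
  also have "\<dots> = (star A x \<otimes> y) \<otimes> star A y"
    using closed by (simp only: mul_assoc star_closed)
  also have "\<dots> \<sim> (star A x \<otimes> x) \<otimes> star A y"
    using closed assms by (intro equiv_mul equiv_mul_left equiv_sym[OF assms] equiv_refl) simp_all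
  also have "\<dots> = (x \<otimes> star A x) \<otimes> star A y"
    using closed by (simp only: mul_comm[of "star A x" x] star_closed)
  also have "\<dots> \<sim> \<one> \<otimes> star A y"
    using closed False by (intro equiv_mul mul_star_equiv_one equiv_refl) simp_all
  also have "\<dots> = star A y"
    using closed by simp
  finally show ?thesis .
qed

lemma char_factor_equiv_one:
  assumes "natc A p \<in> J"
  shows "char_factor p \<sim> \<one>"
proof -
  have "star A (natc A p) \<otimes> natc A p \<sim> \<zero>"
    using assms by (simp add: equiv_zero_iff mul_mem_left)
  then have "char_factor p \<sim> \<one> \<oplus> \<ominus> \<zero>"
    by (intro equiv_add equiv_neg equiv_refl) simp
  then show ?thesis
    by simp
qed

lemma char_factor_equiv_zero:
  assumes "natc A p \<notin> J"
  shows "char_factor p \<sim> \<zero>"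
proof -
  have "star A (natc A p) \<otimes> natc A p \<sim> \<one>"
    using assms mul_star_equiv_one[of "natc A p"] by (simp add: mul_comm[of "star A (natc A p)"])
  then have "char_factor p \<sim> \<one> \<oplus> \<ominus> \<one>"
    by (intro equiv_add equiv_neg equiv_refl) simp
  then show ?thesis
    by simp
qed

lemma root_equiv:
  assumes p: "prime p" and equiv: "x \<sim> y"
  shows "root A p x \<sim> root A p y"
proof -
  have closed: "x \<in> carrier A" "y \<in> carrier A"
    using equiv by (simp_all add: equiv_closed)
  show ?thesis
  proof (cases "natc A p \<in> J")
    case True
    have "pw A (root A p x) p = char_factor p \<otimes> x"
      using p closed by simp
    also have "\<dots> \<sim> \<one> \<otimes> y"
      using True equiv by (intro equiv_mul char_factor_equiv_one)
    also have "\<dots> \<sim> char_factor p \<otimes> y"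
      using True closed by (intro equiv_mul equiv_sym[OF char_factor_equiv_one] equiv_refl)
    also have "\<dots> = pw A (root A p y) p"
      using p closed by simp
    finally show ?thesis
      using frobenius_injective[OF p True] p closed by simp
  next
    case False
    have "root A p z \<in> J" if "z \<in> carrier A" for z
    proof -
      have "char_factor p \<otimes> z \<sim> \<zero> \<otimes> z"
        using False that by (intro equiv_mul char_factor_equiv_zero equiv_refl)
      then have "pw A (root A p z) p \<in> J"
        using p that by (simp add: equiv_zero_iff)
      then show ?thesis
        using pw_mem_imp_mem[OF root_closed[OF p that] _ prime_gt_0_nat[OF p]] by blast
    qed
    then show ?thesis
      using closed equiv_zero_iff equiv_sym equiv_trans by meson
  qed
qed

(* Classes modulo J are represented by chosen members, so that A/J is an algebra on the carrier
   type of A. *)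
definition rep :: "'a \<Rightarrow> 'a" where
  "rep x = (SOME y. x \<sim> y)"

definition quot_alg :: "'a icalg" where
  "quot_alg = \<lparr>carrier = rep ` carrier A, add = \<lambda>u v. rep (u \<oplus> v), mul = \<lambda>u v. rep (u \<otimes> v),
     neg = \<lambda>u. rep (\<ominus> u), zero = rep \<zero>, one = rep \<one>, star = \<lambda>u. rep (star A u),
     root = \<lambda>p u. rep (root A p u)\<rparr>"

lemma rep_equiv: "x \<in> carrier A \<Longrightarrow> x \<sim> rep x"
  unfolding rep_def by (rule someI) (rule equiv_refl)

lemma rep_closed: "x \<in> carrier A \<Longrightarrow> rep x \<in> carrier A"
  using rep_equiv equiv_closed by blast

lemma rep_eq_iff: "x \<in> carrier A \<Longrightarrow> y \<in> carrier A \<Longrightarrow> rep x = rep y \<longleftrightarrow> x \<sim> y"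
proof
  assume "x \<in> carrier A" "y \<in> carrier A" "rep x = rep y"
  then show "x \<sim> y"
    using rep_equiv equiv_sym equiv_trans by metis
next
  assume "x \<sim> y"
  then have "(\<lambda>z. x \<sim> z) = (\<lambda>z. y \<sim> z)"
    using equiv_sym equiv_trans by blast
  then show "rep x = rep y"
    unfolding rep_def by simp
qed

lemma rep_eq_iff_diff_mem: "x \<in> carrier A \<Longrightarrow> y \<in> carrier A \<Longrightarrow> rep x = rep y \<longleftrightarrow> x \<oplus> \<ominus> y \<in> J"
  by (simp add: rep_eq_iff equiv_mod_def)

lemma rep_hom: "is_hom A quot_alg rep"
  unfolding is_hom_def quot_alg_def
  using rep_closed rep_equiv
  by (auto simp: rep_eq_iff intro: equiv_add equiv_mul equiv_neg star_equiv root_equiv)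

lemma quot_alg_is_field: "is_field quot_alg"
  unfolding is_field_def
proof (intro conjI ballI impI)
  show "is_algebra quot_alg"
    unfolding is_algebra_def quot_alg_def by (auto simp: rep_closed)
  show "comm_ring_ax quot_alg"
    using ICM_axioms_hom_image[OF icm_alg_axioms rep_hom] by (simp add: quot_alg_def ICM_axioms_def)
  show "one quot_alg \<noteq> zero quot_alg"
    using one_not_mem by (simp add: quot_alg_def rep_eq_iff equiv_zero_iff)
next
  fix u assume "u \<in> carrier quot_alg" "u \<noteq> zero quot_alg"
  obtain x where x: "x \<in> carrier A" and u: "u = rep x"
    using \<open>u \<in> carrier quot_alg\<close> by (auto simp: quot_alg_def)
  have "x \<notin> J"
    using \<open>u \<noteq> zero quot_alg\<close> x u by (auto simp: quot_alg_def rep_eq_iff equiv_zero_iff)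
  have "mul quot_alg u (rep (star A x)) = rep (x \<otimes> star A x)"
    using hom_mul[OF rep_hom, of x "star A x"] x u by (simp add: quot_alg_def)
  also have "\<dots> = one quot_alg"
    using x \<open>x \<notin> J\<close> mul_star_equiv_one by (simp add: quot_alg_def rep_eq_iff)
  finally show "\<exists>v\<in>carrier quot_alg. mul quot_alg u v = one quot_alg"
    using x by (auto simp: quot_alg_def)
qed

lemma quot_alg_implicitly_closed: "implicitly_closed_field quot_alg"
  using quot_alg_is_field ICM_axioms_hom_image[OF icm_alg_axioms rep_hom]
  by (simp add: implicitly_closed_field_iff quot_alg_def)

end

theorem ICM_axioms_if_ICM_embedding:
  assumes "is_algebra A" and "ICM_embedding A I F h"
  shows "ICM_axioms A"
proof -
  interpret icalgebra A
    using assms(1) by unfold_locales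
  have fields: "\<And>i. i \<in> I \<Longrightarrow> implicitly_closed_field (F i)"
    and "is_hom A (prod_alg I F) h" and inj: "inj_on h (carrier A)"
    using assms(2) unfolding ICM_embedding_def by auto
  then have ext: "h ` carrier A \<subseteq> extensional I" and proj: "\<And>i. i \<in> I \<Longrightarrow> is_hom A (F i) (\<lambda>x. h x i)"
    by (simp_all add: is_hom_prod_alg_iff)
  show ?thesis
  proof (rule ICM_axioms_of_separating_homs[OF _ proj])
    show "icm_alg (F i)" if "i \<in> I" for i
      using fields[OF that] by (intro icm_algI) (simp_all add: implicitly_closed_field_iff is_field_def)
  next
    fix x y assume "x \<in> carrier A" "y \<in> carrier A" "\<And>i. i \<in> I \<Longrightarrow> h x i = h y i"
    moreover from this have "h x = h y"
      using ext by (intro extensionalityI[of _ I]) auto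
    ultimately show "x = y"
      using inj unfolding inj_on_def by blast
  qed
qed

theorem ICM_embedding_if_ICM_axioms:
  fixes A :: "'a icalg"
  assumes "is_algebra A" and "ICM_axioms A"
  shows "\<exists>(I :: 'a set) (F :: 'a \<Rightarrow> 'a icalg) h. ICM_embedding A I F h"
proof -
  interpret icm_alg A
    using assms by (rule icm_algI)
  define I where "I = carrier A - {\<zero>}"
  have "\<forall>a\<in>I. \<exists>M. prime_ideal M \<and> a \<notin> M"
    unfolding I_def using exists_prime_ideal_avoiding by (metis DiffE singletonI)
  then obtain M where M: "\<And>a. a \<in> I \<Longrightarrow> prime_ideal (M a) \<and> a \<notin> M a"
    by metis
  have quot: "icm_prime_ideal A (M a)" if "a \<in> I" for a
    using M[OF that] by unfold_locales blast
  define F where "F a = icm_prime_ideal.quot_alg A (M a)" for a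
  define h where "h x = (\<lambda>a\<in>I. icm_prime_ideal.rep A (M a) x)" for x
  have "implicitly_closed_field (F a)" if "a \<in> I" for a
    unfolding F_def using icm_prime_ideal.quot_alg_implicitly_closed[OF quot[OF that]] .
  moreover have "is_hom A (prod_alg I F) h"
    unfolding is_hom_prod_alg_iff h_def F_def using icm_prime_ideal.rep_hom[OF quot]
    by (simp add: image_subset_iff)
  moreover have "inj_on h (carrier A)"
  proof (rule inj_onI, rule ccontr)
    fix x y assume closed: "x \<in> carrier A" "y \<in> carrier A" and "h x = h y" "x \<noteq> y"
    define a where "a = x \<oplus> \<ominus> y"
    have "a \<in> I"
      using closed \<open>x \<noteq> y\<close> unfolding a_def I_def by (simp add: add_neg_eq_zero_iff)
    then have "icm_prime_ideal.rep A (M a) x = icm_prime_ideal.rep A (M a) y"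
      using \<open>h x = h y\<close> unfolding h_def by (metis restrict_apply')
    then have "a \<in> M a"
      using icm_prime_ideal.rep_eq_iff_diff_mem[OF quot[OF \<open>a \<in> I\<close>]] closed
      by (simp add: a_def)
    then show False
      using M[OF \<open>a \<in> I\<close>] by blast
  qed
  ultimately show ?thesis
    unfolding ICM_embedding_def by blast
qed

theorem mainTheorem5:
  fixes A :: "'a icalg"
  assumes "is_algebra A"
  shows "((\<exists>(I :: 'i set) (F :: 'i \<Rightarrow> 'b icalg) h. ICM_embedding A I F h) \<longrightarrow> ICM_axioms A)
       \<and> (ICM_axioms A \<longrightarrow> (\<exists>(I :: 'a set) (F :: 'a \<Rightarrow> 'a icalg) h. ICM_embedding A I F h))"
  using ICM_axioms_if_ICM_embedding[OF assms] ICM_embedding_if_ICM_axioms[OF assms] by blast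

end
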